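(* Let $g\in\mathscr{A}_3(\Pi)$ and let $(E_n)_{n\ge1}$ be an exhausting sequence of bounded subsets of $E$ such that $\lim_n\mathrm{tr}(\chi_{E_n}\Pi|g-1|^2\chi_{E_n^c}\Pi\chi_{E_n})=0$. Set $g_n=1+(g-1)\chi_{E_n}$. Then $L(g_n/g)\to0$ and $V(g_n/g)\to0$ as $n\to\infty$ (i.e. $g_n\to g$ in the topology $\mathscr{T}$).
   Context: $E$ is a locally compact complete separable metric space with $\sigma$-finite Borel measure $\mu$; $\Pi$ is a locally trace class orthogonal projection on $L^2(E,\mu)$ with kernel $\Pi(x,y)$ whose diagonal satisfies $\mathrm{tr}(\chi_B\Pi\chi_B)=\int_B\Pi(x,x)d\mu$. For Borel $f$, $L(f)=\int_E|f(x)-1|^3\Pi(x,x)d\mu(x)$ and $V(f)=\iint_{E^2}|f(x)-f(y)|^2|\Pi(x,y)|^2d\mu(x)d\mu(y)$. $\mathscr{A}_3(\Pi)$ is the set of positive Borel $g$ with $0<\inf g\le\sup g<\infty$, $L(g)<\infty$, $V(g)<\infty$, and for which some exhausting sequence of bounded sets $(E_n)$ satisfies $\lim_n\mathrm{tr}(\chi_{E_n}\Pi|g-1|^2\chi_{E_n^c}\Pi\chi_{E_n})=0$. The topology $\mathscr{T}$ on $\mathscr{A}_3(\Pi)$ is the one in which $g_n\to g$ iff $L(g_n/g)\to0$ and $V(g_n/g)\to0$. *)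

theory Defs
  imports "HOL-Analysis.Analysis"
begin

definition L2fun :: "'a measure \<Rightarrow> ('a \<Rightarrow> complex) \<Rightarrow> bool" where
  "L2fun M f \<longleftrightarrow> f \<in> borel_measurable M \<and> integrable M (\<lambda>x. (cmod (f x))\<^sup>2)"

definition kop :: "'a measure \<Rightarrow> ('a \<Rightarrow> 'a \<Rightarrow> complex) \<Rightarrow> ('a \<Rightarrow> complex) \<Rightarrow> 'a \<Rightarrow> complex" where
  "kop M K f = (\<lambda>x. LINT y|M. K x y * f y)"

definition projection_kernel :: "'a measure \<Rightarrow> ('a \<Rightarrow> 'a \<Rightarrow> complex) \<Rightarrow> bool" where
  "projection_kernel M K \<longleftrightarrow>
     (\<lambda>(x,y). K x y) \<in> borel_measurable (M \<Otimes>\<^sub>M M) \<and>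
     (\<forall>x. L2fun M (K x)) \<and>
     (\<forall>f. L2fun M f \<longrightarrow> L2fun M (kop M K f) \<and>
          (AE x in M. kop M K (kop M K f) x = kop M K f x)) \<and>
     (\<forall>f h. L2fun M f \<longrightarrow> L2fun M h \<longrightarrow>
          (LINT x|M. cnj (kop M K f x) * h x) = (LINT x|M. cnj (f x) * kop M K h x))"

text \<open>tr(chi_B Pi chi_B) = ||Pi chi_B||_HS^2 (as Pi is a self-adjoint idempotent).\<close>
definition tr_loc :: "'a measure \<Rightarrow> ('a \<Rightarrow> 'a \<Rightarrow> complex) \<Rightarrow> 'a set \<Rightarrow> ennreal" where
  "tr_loc M K B = (\<integral>\<^sup>+ y. indicator B y * (\<integral>\<^sup>+ x. ennreal ((cmod (K x y))\<^sup>2) \<partial>M) \<partial>M)"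

text \<open>tr(chi_A Pi |g-1|^2 chi_{A^c} Pi chi_A) = || |g-1| chi_{A^c} Pi chi_A ||_HS^2.\<close>
definition tail_trace :: "'a measure \<Rightarrow> ('a \<Rightarrow> 'a \<Rightarrow> complex) \<Rightarrow> ('a \<Rightarrow> real) \<Rightarrow> 'a set \<Rightarrow> ennreal" where
  "tail_trace M K g A = (\<integral>\<^sup>+ y. indicator A y *
      (\<integral>\<^sup>+ x. indicator (- A) x * ennreal ((g x - 1)\<^sup>2 * (cmod (K x y))\<^sup>2) \<partial>M) \<partial>M)"

definition Lfun :: "'a measure \<Rightarrow> ('a \<Rightarrow> 'a \<Rightarrow> complex) \<Rightarrow> ('a \<Rightarrow> real) \<Rightarrow> ennreal" where
  "Lfun M K f = (\<integral>\<^sup>+ x. ennreal (\<bar>f x - 1\<bar> ^ 3 * Re (K x x)) \<partial>M)"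

definition Vfun :: "'a measure \<Rightarrow> ('a \<Rightarrow> 'a \<Rightarrow> complex) \<Rightarrow> ('a \<Rightarrow> real) \<Rightarrow> ennreal" where
  "Vfun M K f = (\<integral>\<^sup>+ z. ennreal ((f (fst z) - f (snd z))\<^sup>2 * (cmod (K (fst z) (snd z)))\<^sup>2) \<partial>(M \<Otimes>\<^sub>M M))"

definition exhausting :: "(nat \<Rightarrow> 'a::metric_space set) \<Rightarrow> bool" where
  "exhausting En \<longleftrightarrow> incseq En \<and> (\<Union>n. En n) = UNIV \<and>
     (\<forall>n. bounded (En n) \<and> En n \<in> sets borel)"

definition A3 :: "'a::metric_space measure \<Rightarrow> ('a \<Rightarrow> 'a \<Rightarrow> complex) \<Rightarrow> ('a \<Rightarrow> real) set" where
  "A3 M K = {g. g \<in> borel_measurable borel \<and> (\<forall>x. g x > 0) \<and>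
      0 < (INF x. g x) \<and> bdd_below (range g) \<and> bdd_above (range g) \<and>
      Lfun M K g < \<infinity> \<and> Vfun M K g < \<infinity> \<and>
      (\<exists>En. exhausting En \<and> (\<lambda>n. tail_trace M K g (En n)) \<longlonglongrightarrow> 0)}"

end

theory Submission
  imports Defs
begin

(* Since g \<ge> m > 0, the ratio g_n/g equals 1 on E_n and 1/g off E_n, while
   |1/g - 1| \<le> |g - 1|/m and |1/g(x) - 1/g(y)| \<le> |g(x) - g(y)|/m^2.
   So L(g_n/g) is at most L(g)/m^3 restricted to the complement of E_n, which vanishes in the
   limit by monotone convergence. For V(g_n/g), split E \<times> E according to membership in E_n:
   the part on E_n^c \<times> E_n^c is handled like L, with V(g)/m^4 as the integrable majorant, and
   each of the two mixed parts is at most the tail trace over m^2. One of these needs the symmetry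
   |\<Pi>(x,y)| = |\<Pi>(y,x)|, which comes from the self-adjointness of \<Pi> tested against indicators
   of bounded sets of finite measure; local trace class makes the kernel integrable on such
   rectangles, and a Dynkin argument extends the vanishing to all measurable sets. *)

lemma nn_integral_decseq_tendsto_0:
  fixes u :: "nat \<Rightarrow> 'a \<Rightarrow> ennreal"
  assumes dec: "\<And>n x. u (Suc n) x \<le> u n x" and [measurable]: "\<And>n. u n \<in> borel_measurable M"
    and fin: "(\<integral>\<^sup>+ x. u 0 x \<partial>M) < \<infinity>" and vanish: "\<And>x. \<exists>n. u n x = 0"
  shows "(\<lambda>n. \<integral>\<^sup>+ x. u n x \<partial>M) \<longlonglongrightarrow> 0"
proof -
  have "decseq (\<lambda>n. \<integral>\<^sup>+ x. u n x \<partial>M)"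
    by (intro decseq_SucI nn_integral_mono dec)
  moreover have "(INF n. u n x) = 0" for x
    by (metis vanish INF_lower UNIV_I le_zero_eq)
  then have "(INF n. \<integral>\<^sup>+ x. u n x \<partial>M) = 0"
    using nn_integral_monotone_convergence_INF_decseq[of u M] dec fin
    by (simp add: decseq_SucI le_funI)
  ultimately show ?thesis
    using LIMSEQ_INF by fastforce
qed

lemma set_integral_eq_0_if_rectangles:
  fixes f :: "'a \<times> 'b \<Rightarrow> 'c::{banach, second_countable_topology}"
  assumes f: "integrable (M1 \<Otimes>\<^sub>M M2) f"
    and rect: "\<And>a b. a \<in> sets M1 \<Longrightarrow> b \<in> sets M2 \<Longrightarrow> (LINT z:a \<times> b|M1 \<Otimes>\<^sub>M M2. f z) = 0"
    and C: "C \<in> sets (M1 \<Otimes>\<^sub>M M2)"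
  shows "(LINT z:C|M1 \<Otimes>\<^sub>M M2. f z) = 0"
proof -
  let ?G = "{a \<times> b | a b. a \<in> sets M1 \<and> b \<in> sets M2}"
  have set_int: "set_integrable (M1 \<Otimes>\<^sub>M M2) X f" if "X \<in> sets (M1 \<Otimes>\<^sub>M M2)" for X
    unfolding set_integrable_def using integrable_mult_indicator[OF that f] .
  have "C \<in> sigma_sets (space M1 \<times> space M2) ?G"
    using C sets_pair_measure by metis
  with Int_stable_pair_measure_generator pair_measure_closed show ?thesis
  proof (induct rule: sigma_sets_induct_disjoint)
    case (basic X)
    then show ?case using rect by blast
  next
    case empty
    then show ?case by (simp add: set_lebesgue_integral_def)
  next
    case (compl X)
    have X: "X \<in> sets (M1 \<Otimes>\<^sub>M M2)" using compl(1) sets_pair_measure by metis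
    have "(LINT z:space M1 \<times> space M2|M1 \<Otimes>\<^sub>M M2. f z) =
        (LINT z:space M1 \<times> space M2 - X|M1 \<Otimes>\<^sub>M M2. f z) + (LINT z:X|M1 \<Otimes>\<^sub>M M2. f z)"
      using X sets.sets_into_space[OF X]
      by (subst set_integral_Un[symmetric]) (auto simp: set_int space_pair_measure Un_absorb2)
    then show ?case using compl(2) rect[OF sets.top sets.top] by simp
  next
    case (union X)
    have X: "X i \<in> sets (M1 \<Otimes>\<^sub>M M2)" for i using union(2) sets_pair_measure by (metis range_subsetD)
    have "(LINT z:(\<Union>i. X i)|M1 \<Otimes>\<^sub>M M2. f z) = (\<Sum>i. LINT z:X i|M1 \<Otimes>\<^sub>M M2. f z)"
      using union(1) X by (intro lebesgue_integral_countable_add set_int) (auto simp: disjoint_family_on_def)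
    then show ?case using union(3) by simp
  qed
qed

lemma AE_eq_0_if_rectangle_integrals_eq_0:
  fixes f :: "'a \<times> 'b \<Rightarrow> 'c::{banach, second_countable_topology}"
  assumes "pair_sigma_finite M1 M2" and f: "integrable (M1 \<Otimes>\<^sub>M M2) f"
    and "\<And>a b. a \<in> sets M1 \<Longrightarrow> b \<in> sets M2 \<Longrightarrow> (LINT z:a \<times> b|M1 \<Otimes>\<^sub>M M2. f z) = 0"
  shows "AE z in M1 \<Otimes>\<^sub>M M2. f z = 0"
proof -
  interpret pair_sigma_finite M1 M2 by fact
  interpret P: sigma_finite_measure "M1 \<Otimes>\<^sub>M M2" ..
  show ?thesis
    using set_integral_eq_0_if_rectangles[OF f] assms(3) by (intro P.density_zero[OF f]) blast
qed

lemma abs_inverse_minus_one_le: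
  fixes m t :: real
  assumes "0 < m" "m \<le> t"
  shows "\<bar>1 / t - 1\<bar> \<le> \<bar>t - 1\<bar> / m"
proof -
  have "\<bar>1 / t - 1\<bar> = \<bar>t - 1\<bar> / t" using assms by (simp add: field_simps abs_minus_commute)
  also have "\<dots> \<le> \<bar>t - 1\<bar> / m" using assms by (intro divide_left_mono) auto
  finally show ?thesis .
qed

lemma abs_inverse_diff_le:
  fixes m s t :: real
  assumes "0 < m" "m \<le> s" "m \<le> t"
  shows "\<bar>1 / s - 1 / t\<bar> \<le> \<bar>s - t\<bar> / m\<^sup>2"
proof -
  have "\<bar>1 / s - 1 / t\<bar> = \<bar>s - t\<bar> / (s * t)" using assms by (simp add: field_simps abs_minus_commute)
  also have "\<dots> \<le> \<bar>s - t\<bar> / m\<^sup>2"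
    using assms by (intro divide_left_mono) (auto simp: power2_eq_square intro: mult_mono)
  finally show ?thesis .
qed

definition truncated_ratio :: "('a \<Rightarrow> real) \<Rightarrow> 'a set \<Rightarrow> 'a \<Rightarrow> real" where
  "truncated_ratio g A = (\<lambda>x. (1 + (g x - 1) * indicator A x) / g x)"

lemma abs_truncated_ratio_minus_one:
  "g x \<noteq> 0 \<Longrightarrow> \<bar>truncated_ratio g A x - 1\<bar> = indicator (- A) x * \<bar>1 / g x - 1\<bar>"
  by (auto simp: truncated_ratio_def indicator_def)

lemma truncated_ratio_diff_sq_le:
  fixes g :: "'a \<Rightarrow> real"
  assumes m: "0 < m" "m \<le> g x" "m \<le> g y"
  shows "(truncated_ratio g A x - truncated_ratio g A y)\<^sup>2
    \<le> indicator (- A) x * indicator (- A) y * (g x - g y)\<^sup>2 / m ^ 4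
      + indicator (- A) x * indicator A y * (g x - 1)\<^sup>2 / m\<^sup>2
      + indicator A x * indicator (- A) y * (g y - 1)\<^sup>2 / m\<^sup>2"
proof -
  have sq: "u\<^sup>2 \<le> v\<^sup>2" if "\<bar>u\<bar> \<le> v" for u v :: real
    using power_mono[OF that abs_ge_zero, of 2] by simp
  have x: "(1 / g x - 1)\<^sup>2 \<le> (g x - 1)\<^sup>2 / m\<^sup>2"
    using sq[OF abs_inverse_minus_one_le[OF m(1,2)]] by (simp add: power_divide)
  have y: "(1 - 1 / g y)\<^sup>2 \<le> (g y - 1)\<^sup>2 / m\<^sup>2"
    using sq[OF abs_inverse_minus_one_le[OF m(1,3)]] by (simp add: power_divide power2_commute)
  have xy: "(1 / g x - 1 / g y)\<^sup>2 \<le> (g x - g y)\<^sup>2 / m ^ 4"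
    using sq[OF abs_inverse_diff_le[OF m]] by (simp add: power_divide flip: power_mult)
  show ?thesis
    using m x y xy by (auto simp: truncated_ratio_def indicator_def)
qed

lemma decseq_indicator_Compl:
  "incseq A \<Longrightarrow> indicator (- A (Suc n)) x \<le> (indicator (- A n) x :: 'b::linordered_idom)"
  by (auto simp: indicator_def incseq_Suc_iff subset_eq)

lemma Lfun_truncated_ratio_tendsto_0:
  assumes [measurable]: "g \<in> borel_measurable M" "(\<lambda>x. K x x) \<in> borel_measurable M" "\<And>n. En n \<in> sets M"
    and m: "0 < m" "\<And>x. m \<le> g x" and L: "Lfun M K g < \<infinity>"
    and En: "incseq En" "(\<Union>n. En n) = UNIV"
  shows "(\<lambda>n. Lfun M K (truncated_ratio g (En n))) \<longlonglongrightarrow> 0"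
proof -
  have g0: "g x \<noteq> 0" for x using m(1) m(2)[of x] by auto
  define u where "u n x = indicator (- En n) x * ennreal (\<bar>1 / g x - 1\<bar> ^ 3 * Re (K x x))" for n x
  have "Lfun M K (truncated_ratio g (En n)) = (\<integral>\<^sup>+ x. u n x \<partial>M)" for n
    unfolding Lfun_def u_def
    by (intro nn_integral_cong) (simp add: abs_truncated_ratio_minus_one[of g, OF g0] power_mult_distrib split: split_indicator)
  moreover have "(\<lambda>n. \<integral>\<^sup>+ x. u n x \<partial>M) \<longlonglongrightarrow> 0"
  proof (rule nn_integral_decseq_tendsto_0)
    show "u (Suc n) x \<le> u n x" for n x
      unfolding u_def using decseq_indicator_Compl[OF En(1), of n x] by (intro mult_right_mono) auto
    show "u n \<in> borel_measurable M" for n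
      unfolding u_def by measurable
    show "\<exists>n. u n x = 0" for x
      using En(2) unfolding u_def by (auto simp: indicator_def)
    have "(\<integral>\<^sup>+ x. u 0 x \<partial>M) \<le> (\<integral>\<^sup>+ x. ennreal (1 / m ^ 3) * ennreal (\<bar>g x - 1\<bar> ^ 3 * Re (K x x)) \<partial>M)"
    proof (rule nn_integral_mono)
      fix x
      have cube: "\<bar>1 / g x - 1\<bar> ^ 3 \<le> 1 / m ^ 3 * \<bar>g x - 1\<bar> ^ 3"
        using power_mono[OF abs_inverse_minus_one_le[OF m(1) m(2)[of x]], of 3] by (simp add: power_divide)
      have "u 0 x \<le> ennreal (\<bar>1 / g x - 1\<bar> ^ 3) * ennreal (Re (K x x))"
        unfolding u_def by (simp add: ennreal_mult' split: split_indicator)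
      also have "\<dots> \<le> ennreal (1 / m ^ 3 * \<bar>g x - 1\<bar> ^ 3) * ennreal (Re (K x x))"
        by (intro mult_right_mono ennreal_leI cube) simp
      also have "\<dots> = ennreal (1 / m ^ 3) * ennreal (\<bar>g x - 1\<bar> ^ 3 * Re (K x x))"
        using m(1) by (subst ennreal_mult) (auto simp: mult.assoc ennreal_mult')
      finally show "u 0 x \<le> ennreal (1 / m ^ 3) * ennreal (\<bar>g x - 1\<bar> ^ 3 * Re (K x x))" .
    qed
    also have "\<dots> = ennreal (1 / m ^ 3) * Lfun M K g"
      unfolding Lfun_def by (rule nn_integral_cmult) measurable
    also have "\<dots> < \<infinity>" using L by (simp add: ennreal_mult_less_top)
    finally show "(\<integral>\<^sup>+ x. u 0 x \<partial>M) < \<infinity>" .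
  qed
  ultimately show ?thesis by simp
qed

lemma borel_measurable_cnj[measurable]: "cnj \<in> borel_measurable borel"
  by (intro borel_measurable_continuous_onI continuous_on_cnj continuous_on_id)

locale locally_trace_class_projection = sigma_finite_measure M for M :: "'a::metric_space measure" +
  fixes K :: "'a \<Rightarrow> 'a \<Rightarrow> complex"
  assumes sets_M: "sets M = sets borel"
    and projection: "projection_kernel M K"
    and tr_loc_finite: "\<And>B. bounded B \<Longrightarrow> B \<in> sets borel \<Longrightarrow> tr_loc M K B < \<infinity>"
begin

interpretation P: pair_sigma_finite M M ..

lemma space_M: "space M = UNIV"
  using sets_eq_imp_space_eq[OF sets_M] by simp

lemma sets_Compl: "A \<in> sets M \<Longrightarrow> - A \<in> sets M"
  using sets.compl_sets[of A M] space_M by (simp add: Compl_eq_Diff_UNIV)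

lemma measurable_kernel[measurable]: "(\<lambda>z. K (fst z) (snd z)) \<in> borel_measurable (M \<Otimes>\<^sub>M M)"
  using projection unfolding projection_kernel_def by (simp add: case_prod_beta')

lemma measurable_kernel_transpose[measurable]: "(\<lambda>z. K (snd z) (fst z)) \<in> borel_measurable (M \<Otimes>\<^sub>M M)"
  using measurable_compose[OF measurable_Pair[OF measurable_snd measurable_fst] measurable_kernel] by simp

lemma measurable_kernel_fst[measurable]: "(\<lambda>x. K x y) \<in> borel_measurable M"
  using measurable_Pair1[OF measurable_kernel] by (simp add: space_M)

lemma measurable_kernel_diag[measurable]: "(\<lambda>x. K x x) \<in> borel_measurable M"
  using measurable_compose[OF measurable_Pair[OF measurable_ident_sets[OF refl]
      measurable_ident_sets[OF refl]] measurable_kernel] by simp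

definition bounded_finite :: "'a set \<Rightarrow> bool" where
  "bounded_finite A \<longleftrightarrow> A \<in> sets M \<and> bounded A \<and> emeasure M A < \<infinity>"

lemma bounded_finite_Int: "bounded_finite A \<Longrightarrow> X \<in> sets M \<Longrightarrow> bounded_finite (X \<inter> A)"
  unfolding bounded_finite_def
  by (meson Int_lower2 bounded_subset emeasure_mono le_less_trans sets.Int)

lemma nn_integral_column_eq_tr_loc:
  assumes [measurable]: "A \<in> sets M"
  shows "(\<integral>\<^sup>+ z. indicator A (snd z) * ennreal ((cmod (K (fst z) (snd z)))\<^sup>2) \<partial>(M \<Otimes>\<^sub>M M)) = tr_loc M K A"
proof -
  have "(\<integral>\<^sup>+ z. indicator A (snd z) * ennreal ((cmod (K (fst z) (snd z)))\<^sup>2) \<partial>(M \<Otimes>\<^sub>M M))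
      = (\<integral>\<^sup>+ y. (\<integral>\<^sup>+ x. indicator A y * ennreal ((cmod (K x y))\<^sup>2) \<partial>M) \<partial>M)"
    by (subst P.nn_integral_snd[symmetric]) auto
  also have "\<dots> = tr_loc M K A"
    unfolding tr_loc_def by (intro nn_integral_cong nn_integral_cmult) measurable
  finally show ?thesis .
qed

lemma set_integrable_kernel_rectangle:
  assumes "bounded_finite A" and [measurable]: "B \<in> sets M" and "emeasure M B < \<infinity>"
  shows "set_integrable (M \<Otimes>\<^sub>M M) (B \<times> A) (\<lambda>z. K (fst z) (snd z))"
  unfolding set_integrable_def
proof (rule integrableI_bounded)
  have [measurable]: "A \<in> sets M" using assms(1) unfolding bounded_finite_def by simp
  show "(\<lambda>z. indicator (B \<times> A) z *\<^sub>R K (fst z) (snd z)) \<in> borel_measurable (M \<Otimes>\<^sub>M M)"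
    by measurable
  have "ennreal (norm (indicator (B \<times> A) z *\<^sub>R K (fst z) (snd z)))
      \<le> indicator (B \<times> A) z + indicator A (snd z) * ennreal ((cmod (K (fst z) (snd z)))\<^sup>2)" for z
  proof -
    have "t \<le> 1 + t\<^sup>2" for t :: real
      using zero_le_power2[of "2 * t - 1"] by (simp add: power2_eq_square algebra_simps)
    then have "ennreal t \<le> 1 + ennreal (t\<^sup>2)" for t :: real
      by (metis ennreal_leI ennreal_plus ennreal_1 zero_le_one zero_le_power2)
    then show ?thesis
      by (cases z) (auto simp: indicator_def)
  qed
  then have "(\<integral>\<^sup>+ z. norm (indicator (B \<times> A) z *\<^sub>R K (fst z) (snd z)) \<partial>(M \<Otimes>\<^sub>M M))
      \<le> (\<integral>\<^sup>+ z. indicator (B \<times> A) z + indicator A (snd z) * ennreal ((cmod (K (fst z) (snd z)))\<^sup>2) \<partial>(M \<Otimes>\<^sub>M M))"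
    by (intro nn_integral_mono) auto
  also have "\<dots> = emeasure M B * emeasure M A + tr_loc M K A"
    using emeasure_pair_measure_Times[OF assms(2), of A]
    by (subst nn_integral_add) (auto simp: nn_integral_column_eq_tr_loc)
  also have "\<dots> < \<infinity>"
    using assms tr_loc_finite[of A] sets_M unfolding bounded_finite_def by (simp add: ennreal_mult_less_top)
  finally show "(\<integral>\<^sup>+ z. norm (indicator (B \<times> A) z *\<^sub>R K (fst z) (snd z)) \<partial>(M \<Otimes>\<^sub>M M)) < \<infinity>" .
qed

lemma set_integrable_kernel_transpose_rectangle:
  assumes "bounded_finite A" "bounded_finite B"
  shows "set_integrable (M \<Otimes>\<^sub>M M) (B \<times> A) (\<lambda>z. K (snd z) (fst z))"
  using P.integrable_product_swap[OF set_integrable_kernel_rectangle[of B A, unfolded set_integrable_def]] assms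
  unfolding bounded_finite_def set_integrable_def
  by (simp add: case_prod_beta' indicator_def mem_Times_iff conj_commute)

lemma set_integrable_cnj_kernel_rectangle:
  assumes "bounded_finite A" "bounded_finite B"
  shows "set_integrable (M \<Otimes>\<^sub>M M) (B \<times> A) (\<lambda>z. cnj (K (fst z) (snd z)))"
  using integrable_cnj[OF set_integrable_kernel_rectangle[of A B, unfolded set_integrable_def]] assms
  unfolding bounded_finite_def set_integrable_def by simp

lemma L2fun_indicator: "bounded_finite A \<Longrightarrow> L2fun M (indicator A :: 'a \<Rightarrow> complex)"
proof -
  have "(\<lambda>x. (cmod (indicator A x :: complex))\<^sup>2) = indicator A"
    by (auto simp: indicator_def)
  then show "bounded_finite A \<Longrightarrow> ?thesis"
    unfolding L2fun_def bounded_finite_def by (auto simp: integrable_indicator_iff)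
qed

lemma integral_cnj_kop_indicator:
  assumes A: "bounded_finite A" and B: "bounded_finite B"
  shows "(LINT x|M. cnj (kop M K (indicator A) x) * indicator B x)
    = (LINT z:B \<times> A|M \<Otimes>\<^sub>M M. cnj (K (fst z) (snd z)))"
proof -
  have "(LINT x|M. cnj (kop M K (indicator A) x) * indicator B x)
      = (LINT x|M. LINT y|M. indicator (B \<times> A) (x, y) *\<^sub>R cnj (K x y))"
  proof (rule Bochner_Integration.integral_cong[OF refl])
    fix x
    have "cnj (kop M K (indicator A) x) * indicator B x = (LINT y|M. cnj (K x y * indicator A y)) * indicator B x"
      by (simp only: kop_def Bochner_Integration.integral_cnj)
    also have "\<dots> = (LINT y|M. cnj (K x y * indicator A y) * indicator B x)"
      by (rule integral_mult_left_zero[symmetric])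
    also have "\<dots> = (LINT y|M. indicator (B \<times> A) (x, y) *\<^sub>R cnj (K x y))"
      by (intro Bochner_Integration.integral_cong) (auto simp: indicator_def)
    finally show "cnj (kop M K (indicator A) x) * indicator B x
        = (LINT y|M. indicator (B \<times> A) (x, y) *\<^sub>R cnj (K x y))" .
  qed
  also have "\<dots> = (LINT z:B \<times> A|M \<Otimes>\<^sub>M M. cnj (K (fst z) (snd z)))"
    using P.integral_fst'[OF set_integrable_cnj_kernel_rectangle[OF A B, unfolded set_integrable_def]]
    unfolding set_lebesgue_integral_def by simp
  finally show ?thesis .
qed

lemma integral_indicator_kop:
  assumes A: "bounded_finite A" and B: "bounded_finite B"
  shows "(LINT x|M. cnj (indicator A x) * kop M K (indicator B) x)
    = (LINT z:B \<times> A|M \<Otimes>\<^sub>M M. K (snd z) (fst z))"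
proof -
  have "(LINT x|M. cnj (indicator A x) * kop M K (indicator B) x)
      = (LINT x|M. LINT y|M. indicator (B \<times> A) (y, x) *\<^sub>R K x y)"
  proof (rule Bochner_Integration.integral_cong[OF refl])
    fix x
    have "cnj (indicator A x) * kop M K (indicator B) x = (LINT y|M. indicator A x * (K x y * indicator B y))"
      unfolding kop_def by (simp add: indicator_def)
    also have "\<dots> = (LINT y|M. indicator (B \<times> A) (y, x) *\<^sub>R K x y)"
      by (intro Bochner_Integration.integral_cong) (auto simp: indicator_def)
    finally show "cnj (indicator A x) * kop M K (indicator B) x
        = (LINT y|M. indicator (B \<times> A) (y, x) *\<^sub>R K x y)" .
  qed
  also have "\<dots> = (LINT z:B \<times> A|M \<Otimes>\<^sub>M M. K (snd z) (fst z))"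
    using P.integral_snd[of "\<lambda>y x. indicator (B \<times> A) (y, x) *\<^sub>R K x y"]
      set_integrable_kernel_transpose_rectangle[OF A B]
    unfolding set_integrable_def set_lebesgue_integral_def by (simp add: case_prod_beta')
  finally show ?thesis .
qed

definition hermitian_defect :: "'a \<times> 'a \<Rightarrow> complex" where
  "hermitian_defect z = cnj (K (fst z) (snd z)) - K (snd z) (fst z)"

lemma measurable_hermitian_defect[measurable]: "hermitian_defect \<in> borel_measurable (M \<Otimes>\<^sub>M M)"
  unfolding hermitian_defect_def by measurable

lemma set_integrable_hermitian_defect_rectangle:
  assumes A: "bounded_finite A" and B: "bounded_finite B"
  shows "set_integrable (M \<Otimes>\<^sub>M M) (B \<times> A) hermitian_defect"
  unfolding hermitian_defect_def
  using set_integrable_cnj_kernel_rectangle[OF A B] set_integrable_kernel_transpose_rectangle[OF A B]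
  by (rule set_integral_diff(1))

lemma set_integral_hermitian_defect_rectangle:
  assumes A: "bounded_finite A" and B: "bounded_finite B"
  shows "(LINT z:B \<times> A|M \<Otimes>\<^sub>M M. hermitian_defect z) = 0"
proof -
  have "(LINT x|M. cnj (kop M K (indicator A) x) * indicator B x)
      = (LINT x|M. cnj (indicator A x) * kop M K (indicator B) x)"
    using projection L2fun_indicator[OF A] L2fun_indicator[OF B] unfolding projection_kernel_def by blast
  then show ?thesis
    unfolding hermitian_defect_def integral_cnj_kop_indicator[OF A B] integral_indicator_kop[OF A B]
    using set_integrable_cnj_kernel_rectangle[OF A B] set_integrable_kernel_transpose_rectangle[OF A B]
    by (simp add: set_integral_diff(2))
qed

lemma AE_hermitian_defect_rectangle:
  assumes A: "bounded_finite A" and B: "bounded_finite B"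
  shows "AE z in M \<Otimes>\<^sub>M M. z \<in> B \<times> A \<longrightarrow> hermitian_defect z = 0"
proof -
  have "AE z in M \<Otimes>\<^sub>M M. indicator (B \<times> A) z *\<^sub>R hermitian_defect z = 0"
  proof (rule AE_eq_0_if_rectangle_integrals_eq_0)
    show "pair_sigma_finite M M" ..
    show "integrable (M \<Otimes>\<^sub>M M) (\<lambda>z. indicator (B \<times> A) z *\<^sub>R hermitian_defect z)"
      using set_integrable_hermitian_defect_rectangle[OF A B] unfolding set_integrable_def .
    fix a b assume "a \<in> sets M" "b \<in> sets M"
    then have "(LINT z:a \<times> b|M \<Otimes>\<^sub>M M. indicator (B \<times> A) z *\<^sub>R hermitian_defect z)
        = (LINT z:(a \<inter> B) \<times> (b \<inter> A)|M \<Otimes>\<^sub>M M. hermitian_defect z)"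
      unfolding set_lebesgue_integral_def
      by (intro Bochner_Integration.integral_cong) (auto simp: indicator_def)
    also have "\<dots> = 0"
      using \<open>a \<in> sets M\<close> \<open>b \<in> sets M\<close> A B
      by (intro set_integral_hermitian_defect_rectangle bounded_finite_Int)
    finally show "(LINT z:a \<times> b|M \<Otimes>\<^sub>M M. indicator (B \<times> A) z *\<^sub>R hermitian_defect z) = 0" .
  qed
  then show ?thesis by eventually_elim (auto simp: indicator_def)
qed

lemma bounded_finite_cover: "\<exists>F :: nat \<times> nat \<Rightarrow> 'a set. (\<forall>p. bounded_finite (F p)) \<and> (\<Union>p. F p) = UNIV"
proof -
  obtain A :: "nat \<Rightarrow> 'a set"
    where A: "range A \<subseteq> sets M" "(\<Union>i. A i) = space M" "\<And>i. emeasure M (A i) \<noteq> \<infinity>"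
    using sigma_finite by blast
  fix x0 :: 'a
  define F where "F p = A (fst p) \<inter> ball x0 (real (snd p))" for p
  have "bounded_finite (F p)" for p
  proof -
    have "A (fst p) \<in> sets M" using A(1) by auto
    moreover have "emeasure M (F p) \<le> emeasure M (A (fst p))"
      unfolding F_def using A(1) by (intro emeasure_mono) auto
    moreover have "bounded (F p)" unfolding F_def by (rule bounded_subset[OF bounded_ball]) auto
    ultimately show ?thesis
      using A(3)[of "fst p"] sets_M unfolding bounded_finite_def F_def by (auto simp: less_top)
  qed
  moreover have "\<exists>p. x \<in> F p" for x
  proof -
    obtain i where "x \<in> A i" using A(2) space_M by auto
    moreover obtain n :: nat where "dist x0 x < real n" using reals_Archimedean2 by blast
    ultimately show ?thesis unfolding F_def by (intro exI[of _ "(i, n)"]) auto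
  qed
  ultimately show ?thesis by (intro exI[of _ F]) blast
qed

lemma AE_kernel_hermitian: "AE z in M \<Otimes>\<^sub>M M. K (snd z) (fst z) = cnj (K (fst z) (snd z))"
proof -
  obtain F :: "nat \<times> nat \<Rightarrow> 'a set" where F: "\<And>p. bounded_finite (F p)" and cover: "(\<Union>p. F p) = UNIV"
    using bounded_finite_cover by blast
  have "AE z in M \<Otimes>\<^sub>M M. \<forall>p q. z \<in> F p \<times> F q \<longrightarrow> hermitian_defect z = 0"
    unfolding AE_all_countable using AE_hermitian_defect_rectangle[OF F F] by blast
  then show ?thesis
  proof eventually_elim
    case (elim z)
    obtain p q where "fst z \<in> F p" "snd z \<in> F q" using cover by blast
    then have "z \<in> F p \<times> F q" by (simp add: mem_Times_iff)
    with elim have "hermitian_defect z = 0" by blast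
    then show ?case unfolding hermitian_defect_def by simp
  qed
qed

lemma tail_trace_eq_nn_integral:
  assumes [measurable]: "A \<in> sets M" "h \<in> borel_measurable M"
  shows "tail_trace M K h A = (\<integral>\<^sup>+ z. ennreal (indicator (- A) (fst z) * indicator A (snd z)
      * (h (fst z) - 1)\<^sup>2 * (cmod (K (fst z) (snd z)))\<^sup>2) \<partial>(M \<Otimes>\<^sub>M M))"
proof -
  have [measurable]: "- A \<in> sets M" by (rule sets_Compl) fact
  have "tail_trace M K h A = (\<integral>\<^sup>+ y. (\<integral>\<^sup>+ x. ennreal (indicator (- A) x * indicator A y
      * (h x - 1)\<^sup>2 * (cmod (K x y))\<^sup>2) \<partial>M) \<partial>M)"
    unfolding tail_trace_def
  proof (intro nn_integral_cong)
    fix y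
    show "indicator A y * (\<integral>\<^sup>+ x. indicator (- A) x * ennreal ((h x - 1)\<^sup>2 * (cmod (K x y))\<^sup>2) \<partial>M)
        = (\<integral>\<^sup>+ x. ennreal (indicator (- A) x * indicator A y * (h x - 1)\<^sup>2 * (cmod (K x y))\<^sup>2) \<partial>M)"
      by (cases "y \<in> A") (simp_all add: indicator_def, intro nn_integral_cong, simp)
  qed
  also have "\<dots> = (\<integral>\<^sup>+ z. ennreal (indicator (- A) (fst z) * indicator A (snd z)
      * (h (fst z) - 1)\<^sup>2 * (cmod (K (fst z) (snd z)))\<^sup>2) \<partial>(M \<Otimes>\<^sub>M M))"
    by (subst P.nn_integral_snd[symmetric]) auto
  finally show ?thesis .
qed

lemma tail_trace_eq_nn_integral_transpose:
  assumes [measurable]: "A \<in> sets M" "h \<in> borel_measurable M"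
  shows "tail_trace M K h A = (\<integral>\<^sup>+ z. ennreal (indicator A (fst z) * indicator (- A) (snd z)
      * (h (snd z) - 1)\<^sup>2 * (cmod (K (fst z) (snd z)))\<^sup>2) \<partial>(M \<Otimes>\<^sub>M M))"
proof -
  have [measurable]: "- A \<in> sets M" by (rule sets_Compl) fact
  have "tail_trace M K h A = (\<integral>\<^sup>+ x. (\<integral>\<^sup>+ y. ennreal (indicator A x * indicator (- A) y
      * (h y - 1)\<^sup>2 * (cmod (K y x))\<^sup>2) \<partial>M) \<partial>M)"
    unfolding tail_trace_def
  proof (intro nn_integral_cong)
    fix x
    show "indicator A x * (\<integral>\<^sup>+ y. indicator (- A) y * ennreal ((h y - 1)\<^sup>2 * (cmod (K y x))\<^sup>2) \<partial>M)
        = (\<integral>\<^sup>+ y. ennreal (indicator A x * indicator (- A) y * (h y - 1)\<^sup>2 * (cmod (K y x))\<^sup>2) \<partial>M)"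
      by (cases "x \<in> A") (simp_all add: indicator_def, intro nn_integral_cong, simp)
  qed
  also have "\<dots> = (\<integral>\<^sup>+ z. ennreal (indicator A (fst z) * indicator (- A) (snd z)
      * (h (snd z) - 1)\<^sup>2 * (cmod (K (snd z) (fst z)))\<^sup>2) \<partial>(M \<Otimes>\<^sub>M M))"
    by (subst nn_integral_fst[symmetric]) auto
  also have "\<dots> = (\<integral>\<^sup>+ z. ennreal (indicator A (fst z) * indicator (- A) (snd z)
      * (h (snd z) - 1)\<^sup>2 * (cmod (K (fst z) (snd z)))\<^sup>2) \<partial>(M \<Otimes>\<^sub>M M))"
    using AE_kernel_hermitian by (intro nn_integral_cong_AE) (elim eventually_mono, simp)
  finally show ?thesis .
qed

lemma nn_integral_Compl_Times_tendsto_0: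
  assumes [measurable]: "g \<in> borel_measurable M" "\<And>n. En n \<in> sets M"
    and V: "Vfun M K g < \<infinity>" and En: "incseq En" "(\<Union>n. En n) = UNIV"
  shows "(\<lambda>n. \<integral>\<^sup>+ z. ennreal (indicator (- En n) (fst z) * indicator (- En n) (snd z)
    * (g (fst z) - g (snd z))\<^sup>2 * (cmod (K (fst z) (snd z)))\<^sup>2) \<partial>(M \<Otimes>\<^sub>M M)) \<longlonglongrightarrow> 0"
proof (rule nn_integral_decseq_tendsto_0)
  have [measurable]: "- En n \<in> sets M" for n by (rule sets_Compl) simp
  show "(\<lambda>z. ennreal (indicator (- En n) (fst z) * indicator (- En n) (snd z)
      * (g (fst z) - g (snd z))\<^sup>2 * (cmod (K (fst z) (snd z)))\<^sup>2)) \<in> borel_measurable (M \<Otimes>\<^sub>M M)" for n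
    by measurable
  show "ennreal (indicator (- En (Suc n)) (fst z) * indicator (- En (Suc n)) (snd z)
      * (g (fst z) - g (snd z))\<^sup>2 * (cmod (K (fst z) (snd z)))\<^sup>2)
    \<le> ennreal (indicator (- En n) (fst z) * indicator (- En n) (snd z)
      * (g (fst z) - g (snd z))\<^sup>2 * (cmod (K (fst z) (snd z)))\<^sup>2)" for n z
    using decseq_indicator_Compl[OF En(1), of n "fst z"] decseq_indicator_Compl[OF En(1), of n "snd z"]
    by (intro ennreal_leI mult_right_mono mult_mono) auto
  show "\<exists>n. ennreal (indicator (- En n) (fst z) * indicator (- En n) (snd z)
      * (g (fst z) - g (snd z))\<^sup>2 * (cmod (K (fst z) (snd z)))\<^sup>2) = 0" for z
    using En(2) by (auto simp: indicator_def)
  have "(\<integral>\<^sup>+ z. ennreal (indicator (- En 0) (fst z) * indicator (- En 0) (snd z)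
      * (g (fst z) - g (snd z))\<^sup>2 * (cmod (K (fst z) (snd z)))\<^sup>2) \<partial>(M \<Otimes>\<^sub>M M)) \<le> Vfun M K g"
    unfolding Vfun_def by (intro nn_integral_mono ennreal_leI) (auto simp: indicator_def)
  with V show "(\<integral>\<^sup>+ z. ennreal (indicator (- En 0) (fst z) * indicator (- En 0) (snd z)
      * (g (fst z) - g (snd z))\<^sup>2 * (cmod (K (fst z) (snd z)))\<^sup>2) \<partial>(M \<Otimes>\<^sub>M M)) < \<infinity>"
    by simp
qed

lemma Vfun_truncated_ratio_le:
  assumes [measurable]: "g \<in> borel_measurable M" "A \<in> sets M" and m: "0 < m" "\<And>x. m \<le> g x"
  shows "Vfun M K (truncated_ratio g A)
    \<le> ennreal (1 / m ^ 4) * (\<integral>\<^sup>+ z. ennreal (indicator (- A) (fst z) * indicator (- A) (snd z)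
        * (g (fst z) - g (snd z))\<^sup>2 * (cmod (K (fst z) (snd z)))\<^sup>2) \<partial>(M \<Otimes>\<^sub>M M))
      + ennreal (1 / m\<^sup>2) * tail_trace M K g A + ennreal (1 / m\<^sup>2) * tail_trace M K g A"
proof -
  define k where "k z = (cmod (K (fst z) (snd z)))\<^sup>2" for z
  define p where "p z = indicator (- A) (fst z) * indicator (- A) (snd z) * (g (fst z) - g (snd z))\<^sup>2 * k z" for z
  define s where "s z = indicator (- A) (fst z) * indicator A (snd z) * (g (fst z) - 1)\<^sup>2 * k z" for z
  define t where "t z = indicator A (fst z) * indicator (- A) (snd z) * (g (snd z) - 1)\<^sup>2 * k z" for z
  have [measurable]: "- A \<in> sets M" by (rule sets_Compl) fact
  have [measurable]: "p \<in> borel_measurable (M \<Otimes>\<^sub>M M)" "s \<in> borel_measurable (M \<Otimes>\<^sub>M M)"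
    "t \<in> borel_measurable (M \<Otimes>\<^sub>M M)"
    unfolding p_def s_def t_def k_def by measurable
  have nonneg: "0 \<le> k z" "0 \<le> p z" "0 \<le> s z" "0 \<le> t z" for z
    unfolding k_def p_def s_def t_def by auto
  have "ennreal ((truncated_ratio g A (fst z) - truncated_ratio g A (snd z))\<^sup>2 * k z)
      \<le> ennreal (1 / m ^ 4 * p z + 1 / m\<^sup>2 * s z + 1 / m\<^sup>2 * t z)" for z
    using mult_right_mono[OF truncated_ratio_diff_sq_le[where x="fst z" and y="snd z" and A=A, OF m(1) m(2) m(2)] nonneg(1)]
    unfolding p_def s_def t_def by (intro ennreal_leI) (simp add: algebra_simps)
  also have "\<dots> z = ennreal (1 / m ^ 4) * p z + ennreal (1 / m\<^sup>2) * s z + ennreal (1 / m\<^sup>2) * t z" for z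
    using m(1) nonneg by (simp add: ennreal_plus[symmetric] ennreal_mult[symmetric] del: ennreal_plus)
  finally have "Vfun M K (truncated_ratio g A)
      \<le> (\<integral>\<^sup>+ z. ennreal (1 / m ^ 4) * p z + ennreal (1 / m\<^sup>2) * s z + ennreal (1 / m\<^sup>2) * t z \<partial>(M \<Otimes>\<^sub>M M))"
    unfolding Vfun_def k_def by (intro nn_integral_mono) auto
  also have "\<dots> = ennreal (1 / m ^ 4) * (\<integral>\<^sup>+ z. p z \<partial>(M \<Otimes>\<^sub>M M))
      + ennreal (1 / m\<^sup>2) * (\<integral>\<^sup>+ z. s z \<partial>(M \<Otimes>\<^sub>M M)) + ennreal (1 / m\<^sup>2) * (\<integral>\<^sup>+ z. t z \<partial>(M \<Otimes>\<^sub>M M))"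
    by (simp add: nn_integral_add nn_integral_cmult)
  also have "(\<integral>\<^sup>+ z. s z \<partial>(M \<Otimes>\<^sub>M M)) = tail_trace M K g A"
    unfolding s_def k_def by (simp add: tail_trace_eq_nn_integral)
  also have "(\<integral>\<^sup>+ z. t z \<partial>(M \<Otimes>\<^sub>M M)) = tail_trace M K g A"
    unfolding t_def k_def by (simp add: tail_trace_eq_nn_integral_transpose)
  finally show ?thesis unfolding p_def k_def .
qed

lemma Vfun_truncated_ratio_tendsto_0:
  assumes [measurable]: "g \<in> borel_measurable M" "\<And>n. En n \<in> sets M"
    and m: "0 < m" "\<And>x. m \<le> g x" and V: "Vfun M K g < \<infinity>"
    and En: "incseq En" "(\<Union>n. En n) = UNIV"
    and tail: "(\<lambda>n. tail_trace M K g (En n)) \<longlonglongrightarrow> 0"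
  shows "(\<lambda>n. Vfun M K (truncated_ratio g (En n))) \<longlonglongrightarrow> 0"
proof -
  have bound: "Vfun M K (truncated_ratio g (En n)) \<le> ennreal (1 / m ^ 4) * (\<integral>\<^sup>+ z. ennreal (indicator (- En n) (fst z)
      * indicator (- En n) (snd z) * (g (fst z) - g (snd z))\<^sup>2 * (cmod (K (fst z) (snd z)))\<^sup>2) \<partial>(M \<Otimes>\<^sub>M M))
    + ennreal (1 / m\<^sup>2) * tail_trace M K g (En n) + ennreal (1 / m\<^sup>2) * tail_trace M K g (En n)" for n
    by (rule Vfun_truncated_ratio_le[OF assms(1,2) m])
  have bound_lim: "(\<lambda>n. ennreal (1 / m ^ 4) * (\<integral>\<^sup>+ z. ennreal (indicator (- En n) (fst z)
      * indicator (- En n) (snd z) * (g (fst z) - g (snd z))\<^sup>2 * (cmod (K (fst z) (snd z)))\<^sup>2) \<partial>(M \<Otimes>\<^sub>M M))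
    + ennreal (1 / m\<^sup>2) * tail_trace M K g (En n) + ennreal (1 / m\<^sup>2) * tail_trace M K g (En n)) \<longlonglongrightarrow> 0"
    using tendsto_add[OF tendsto_add[OF ennreal_tendsto_cmult[OF ennreal_less_top nn_integral_Compl_Times_tendsto_0[OF assms(1,2) V En]]
        ennreal_tendsto_cmult[OF ennreal_less_top tail]] ennreal_tendsto_cmult[OF ennreal_less_top tail]]
    by (simp only: mult_zero_right add_0)
  show ?thesis
    by (rule tendsto_sandwich[OF always_eventually always_eventually tendsto_const bound_lim])
       (simp_all only: zero_le bound simp_thms)
qed

end

theorem lemma7p6:
  fixes M :: "'a::polish_space measure" and K :: "'a \<Rightarrow> 'a \<Rightarrow> complex"
    and g :: "'a \<Rightarrow> real" and En :: "nat \<Rightarrow> 'a set"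
  assumes "locally_compact_space (euclidean :: 'a topology)"
    and "sets M = sets borel" and "sigma_finite_measure M"
    and "projection_kernel M K"
    and "\<And>B. bounded B \<Longrightarrow> B \<in> sets borel \<Longrightarrow>
           tr_loc M K B = (\<integral>\<^sup>+ x. indicator B x * ennreal (Re (K x x)) \<partial>M)"
    and "\<And>B. bounded B \<Longrightarrow> B \<in> sets borel \<Longrightarrow> tr_loc M K B < \<infinity>"
    and "g \<in> A3 M K"
    and "exhausting En"
    and "(\<lambda>n. tail_trace M K g (En n)) \<longlonglongrightarrow> 0"
  shows "(\<lambda>n. Lfun M K (\<lambda>x. (1 + (g x - 1) * indicator (En n) x) / g x)) \<longlonglongrightarrow> 0
       \<and> (\<lambda>n. Vfun M K (\<lambda>x. (1 + (g x - 1) * indicator (En n) x) / g x)) \<longlonglongrightarrow> 0"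
proof -
  interpret locally_trace_class_projection M K
    using assms(2,3,4,6) unfolding locally_trace_class_projection_def locally_trace_class_projection_axioms_def
    by blast
  have g: "g \<in> borel_measurable borel" "0 < (INF x. g x)" "bdd_below (range g)"
    "Lfun M K g < \<infinity>" "Vfun M K g < \<infinity>"
    using assms(7) unfolding A3_def by auto
  have g_M: "g \<in> borel_measurable M"
    using g(1) measurable_cong_sets[OF assms(2) refl] by blast
  have g_ge: "(INF x. g x) \<le> g x" for x
    using g(3) by (intro cINF_lower) auto
  have En: "incseq En" "(\<Union>n. En n) = UNIV" "\<And>n. En n \<in> sets M"
    using assms(2,8) unfolding exhausting_def by auto
  show ?thesis
    using Lfun_truncated_ratio_tendsto_0[OF g_M measurable_kernel_diag En(3) g(2) g_ge g(4) En(1,2)]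
      Vfun_truncated_ratio_tendsto_0[OF g_M En(3) g(2) g_ge g(5) En(1,2) assms(9)]
    unfolding truncated_ratio_def by simp
qed

end
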